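(* Let $\mathcal F$ be a class of functions $\mathcal X\times\mathcal A\to[0,1]$ that is convex and closed under pointwise convergence. Let $H$ be a finite multiset of triples $(x',a',r')\in\mathcal X\times\mathcal A\times[0,1]$, let $(x,a)\in\mathcal X\times\mathcal A$, $\beta>0$ and $\alpha\in(0,1)$. Put $R(f)=\sum_{(x',a',r')\in H}(f(x',a')-r')^2$ and $$z^{\mathrm{high}}=\max\{f(x,a): f\in\mathcal F,\ R(f)\le \min_{f'\in\mathcal F}R(f')+\beta\},\qquad z^{\mathrm{low}}=\min\{f(x,a): f\in\mathcal F,\ R(f)\le \min_{f'\in\mathcal F}R(f')+\beta\}.$$ Then $\textsc{BinSearch}(\textsc{High},(x,a),H,\beta,\alpha)$ and $\textsc{BinSearch}(\textsc{Low},(x,a),H,\beta,\alpha)$ each terminate after $O(\log(1/\alpha))$ oracle invocations, and their outputs $z_{\mathrm{High}}$, $z_{\mathrm{Low}}$ satisfy $|z_{\mathrm{High}}-z^{\mathrm{high}}|\le\alpha$ and $|z_{\mathrm{Low}}-z^{\mathrm{low}}|\le\alpha$.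
   Context: $\mathcal A=\{1,\dots,K\}$ is a finite action set and $\mathcal X$ a context space. $\mathcal F$ convex means $\lambda f+(1-\lambda)g\in\mathcal F$ for $f,g\in\mathcal F$, $\lambda\in[0,1]$. An oracle invocation with weight $w\ge0$ returns some minimizer over $f\in\mathcal F$ of $\tilde R(f,w)=R(f)+\frac w2(f(x,a)-r)^2$, where $r=2$ for bound type \textsc{High} and $r=-1$ for \textsc{Low}. Procedure $\textsc{BinSearch}(\text{type},(x,a),H,\beta,\alpha)$: set $w_L=0$, $w_H=\beta/\alpha$; call the oracle with $w_L$ obtaining $f_L$, $z_L=f_L(x,a)$, and with $w_H$ obtaining $f_H$, $z_H=f_H(x,a)$; set $R_{\min}=R(f_L)$ and $\Delta=\alpha\beta/|r-z_L|^3$. While $|z_H-z_L|>\alpha$ and $|w_H-w_L|>\Delta$: set $w=(w_H+w_L)/2$, call the oracle with $w$ obtaining $f$ and $z=f(x,a)$; if $R(f)\ge R_{\min}+\beta$ set $(w_H,z_H)\leftarrow(w,z)$, otherwise set $(w_L,z_L)\leftarrow(w,z)$. Return $z_H$. *)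

theory Defs
  imports "HOL-Analysis.Analysis" "HOL-Library.While_Combinator" "HOL-Library.Multiset"
begin

(* Functions X x A -> R are modelled as total functions on the product type 'x * 'a.
   The class F is a set of such functions; "closed under pointwise convergence" is
   closedness in the topology of pointwise convergence (product topology on functions,
   instance from HOL-Analysis.Function_Topology). *)

datatype bound_type = High | Low

definition target :: "bound_type \<Rightarrow> real" where
  "target t = (case t of High \<Rightarrow> 2 | Low \<Rightarrow> -1)"

definition Rsq :: "('x \<times> 'a \<times> real) multiset \<Rightarrow> ('x \<times> 'a \<Rightarrow> real) \<Rightarrow> real" where
  "Rsq H f = sum_mset (image_mset (\<lambda>(x', a', r'). (f (x', a') - r')^2) H)"

definition Rtilde :: "('x \<times> 'a \<times> real) multiset \<Rightarrow> 'x \<times> 'a \<Rightarrow> real \<Rightarrow> ('x \<times> 'a \<Rightarrow> real) \<Rightarrow> real \<Rightarrow> real" where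
  "Rtilde H p r f w = Rsq H f + w / 2 * (f p - r)^2"

definition convex_class :: "('x \<times> 'a \<Rightarrow> real) set \<Rightarrow> bool" where
  "convex_class F \<longleftrightarrow> (\<forall>f\<in>F. \<forall>g\<in>F. \<forall>l::real. 0 \<le> l \<and> l \<le> 1 \<longrightarrow> (\<lambda>q. l * f q + (1 - l) * g q) \<in> F)"

(* Indexing by the call
   number allows the oracle to resolve ties arbitrarily (even history-dependently). *)
definition is_oracle :: "('x \<times> 'a \<Rightarrow> real) set \<Rightarrow> ('x \<times> 'a \<times> real) multiset \<Rightarrow> 'x \<times> 'a \<Rightarrow> real
    \<Rightarrow> (nat \<Rightarrow> real \<Rightarrow> ('x \<times> 'a \<Rightarrow> real)) \<Rightarrow> bool" where
  "is_oracle F H p r orc \<longleftrightarrow>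
     (\<forall>k w. 0 \<le> w \<longrightarrow> orc k w \<in> F \<and> (\<forall>g\<in>F. Rtilde H p r (orc k w) w \<le> Rtilde H p r g w))"

(* Loop state: (w_L, z_L, w_H, z_H, number of oracle calls so far).
   Result: None if the loop does not terminate, otherwise Some (z_H, number of oracle calls). *)
definition binsearch :: "bound_type \<Rightarrow> 'x \<times> 'a \<Rightarrow> ('x \<times> 'a \<times> real) multiset \<Rightarrow> real \<Rightarrow> real
    \<Rightarrow> (nat \<Rightarrow> real \<Rightarrow> ('x \<times> 'a \<Rightarrow> real)) \<Rightarrow> (real \<times> nat) option" where
  "binsearch t p H \<beta> \<alpha> orc =
    (let r = target t;
         fL = orc 0 0; zL = fL p;
         fH = orc 1 (\<beta> / \<alpha>); zH = fH p;
         Rmin = Rsq H fL;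
         \<Delta> = \<alpha> * \<beta> / \<bar>r - zL\<bar> ^ 3
     in map_option (\<lambda>(wL, zL, wH, zH, k). (zH, k))
          (while_option
             (\<lambda>(wL, zL, wH, zH, k). \<bar>zH - zL\<bar> > \<alpha> \<and> \<bar>wH - wL\<bar> > \<Delta>)
             (\<lambda>(wL, zL, wH, zH, k).
                let w = (wH + wL) / 2; f = orc k w; z = f p
                in if Rsq H f \<ge> Rmin + \<beta> then (wL, zL, w, z, Suc k) else (w, z, wH, zH, Suc k))
             (0, zL, \<beta> / \<alpha>, zH, 2::nat)))"

definition near_opt :: "('x \<times> 'a \<Rightarrow> real) set \<Rightarrow> ('x \<times> 'a \<times> real) multiset \<Rightarrow> real \<Rightarrow> ('x \<times> 'a \<Rightarrow> real) set" where
  "near_opt F H \<beta> = {f \<in> F. Rsq H f \<le> Inf (Rsq H ` F) + \<beta>}"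

definition z_high :: "('x \<times> 'a \<Rightarrow> real) set \<Rightarrow> ('x \<times> 'a \<times> real) multiset \<Rightarrow> 'x \<times> 'a \<Rightarrow> real \<Rightarrow> real" where
  "z_high F H p \<beta> = Sup ((\<lambda>f. f p) ` near_opt F H \<beta>)"

definition z_low :: "('x \<times> 'a \<Rightarrow> real) set \<Rightarrow> ('x \<times> 'a \<times> real) multiset \<Rightarrow> 'x \<times> 'a \<Rightarrow> real \<Rightarrow> real" where
  "z_low F H p \<beta> = Inf ((\<lambda>f. f p) ` near_opt F H \<beta>)"

definition z_bound :: "bound_type \<Rightarrow> ('x \<times> 'a \<Rightarrow> real) set \<Rightarrow> ('x \<times> 'a \<times> real) multiset \<Rightarrow> 'x \<times> 'a \<Rightarrow> real \<Rightarrow> real" where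
  "z_bound t F H p \<beta> = (case t of High \<Rightarrow> z_high F H p \<beta> | Low \<Rightarrow> z_low F H p \<beta>)"

end

theory Submission
  imports Defs
begin

(*
  Write d f = |f(x,a) - r| for the distance of a prediction from the target r; it lies in [1, 2]
  on F.  A minimiser of R f + w/2 (d f)^2 trades risk against distance.  At weight beta/alpha it is
  within alpha of the smallest distance attained by beta-near-optimal functions, and at any weight
  where it is not itself near-optimal it is at least as close to r as all of them.  Bisection on the
  weight therefore keeps a near-optimal low end and an alpha-extremal high end.  Once the weight
  interval is shorter than alpha beta / (d f_0)^3, the first-order conditions of the two end
  minimisers over the convex class F, combined with the lower bound on the high weight forced by
  its minimiser not being near-optimal, put the two ends within alpha of each other.  The interval
  starts at beta/alpha and halves with every call, which gives the logarithmic count.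
*)

lemma power2_convex_combination_le:
  fixes l a b r :: real
  assumes "0 \<le> l" "l \<le> 1"
  shows "(l * a + (1 - l) * b - r)\<^sup>2 \<le> l * (a - r)\<^sup>2 + (1 - l) * (b - r)\<^sup>2"
proof -
  have "l * (a - r)\<^sup>2 + (1 - l) * (b - r)\<^sup>2 - (l * a + (1 - l) * b - r)\<^sup>2 = l * (1 - l) * (a - b)\<^sup>2"
    by (simp add: power2_eq_square algebra_simps)
  moreover have "0 \<le> l * (1 - l) * (a - b)\<^sup>2" using assms by simp
  ultimately show ?thesis by linarith
qed

lemma nonneg_if_nonneg_add_small:
  fixes X K :: real
  assumes "\<And>s. 0 < s \<Longrightarrow> s < 1 \<Longrightarrow> 0 \<le> X + s * K"
  shows "0 \<le> X"
proof (rule tendsto_lowerbound)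
  show "((\<lambda>s. X + s * K) \<longlongrightarrow> X) (at_right 0)"
    by (auto intro!: tendsto_eq_intros)
  show "\<forall>\<^sub>F s in at_right 0. 0 \<le> X + s * K"
    using eventually_at_right_real[of 0 "1::real"] by (rule eventually_mono) (auto intro: assms)
qed simp

lemma abs_Sup_diff_le:
  fixes S :: "real set"
  assumes "bdd_above S" and "\<forall>y\<in>S. y \<le> z + \<alpha>" and "\<exists>y\<in>S. z - \<alpha> \<le> y"
  shows "\<bar>Sup S - z\<bar> \<le> \<alpha>"
proof -
  obtain y where "y \<in> S" "z - \<alpha> \<le> y" using assms(3) ..
  moreover have "y \<le> Sup S" using \<open>y \<in> S\<close> assms(1) by (rule cSup_upper)
  moreover have "Sup S \<le> z + \<alpha>" using assms(2) \<open>y \<in> S\<close> by (intro cSup_least) auto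
  ultimately show ?thesis by linarith
qed

lemma abs_Inf_diff_le:
  fixes S :: "real set"
  assumes "bdd_below S" and "\<forall>y\<in>S. z - \<alpha> \<le> y" and "\<exists>y\<in>S. y \<le> z + \<alpha>"
  shows "\<bar>Inf S - z\<bar> \<le> \<alpha>"
proof -
  obtain y where "y \<in> S" "y \<le> z + \<alpha>" using assms(3) ..
  moreover have "Inf S \<le> y" using \<open>y \<in> S\<close> assms(1) by (rule cInf_lower)
  moreover have "z - \<alpha> \<le> Inf S" using assms(2) \<open>y \<in> S\<close> by (intro cInf_greatest) auto
  ultimately show ?thesis by linarith
qed

lemma le_of_pow2_less:
  fixes \<alpha> :: real
  assumes "0 < \<alpha>" "\<alpha> < 1" and pow: "2 ^ k < 64 / \<alpha>\<^sup>2"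
  shows "real k \<le> 6 * (1 + ln (1 / \<alpha>))"
proof -
  define L where "L = ln (1 / \<alpha>)"
  have "0 \<le> L" using assms by (simp add: L_def)
  have ln2: "1 / 2 \<le> ln (2::real)"
    using ln_le_minus_one[of "1/2::real"] by (simp add: ln_div)
  have "real k * ln 2 < ln (64 / \<alpha>\<^sup>2)"
    using pow assms by (simp add: ln_realpow[symmetric] ln_less_cancel_iff)
  also have "ln (64 / \<alpha>\<^sup>2) = 6 * ln 2 + 2 * L"
    using assms ln_realpow[of 2 6] ln_realpow[of \<alpha> 2]
    by (simp add: L_def ln_div)
  finally have "(real k - 6) * ln 2 < 2 * L" by (simp add: algebra_simps)
  also have "\<dots> \<le> 4 * L * ln 2" using mult_left_mono[OF ln2, of "4 * L"] \<open>0 \<le> L\<close> by simp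
  finally have "real k - 6 < 4 * L" using ln2 by (simp add: mult.commute)
  then show ?thesis using \<open>0 \<le> L\<close> by (simp add: L_def)
qed

lemma Rsq_convex_combination_le:
  assumes "0 \<le> l" "l \<le> 1"
  shows "Rsq H (\<lambda>q. l * f q + (1 - l) * g q) \<le> l * Rsq H f + (1 - l) * Rsq H g"
proof (induction H)
  case empty
  then show ?case by (simp add: Rsq_def)
next
  case (add h H)
  obtain x' a' r' where h: "h = (x', a', r')" by (cases h)
  have "(l * f (x', a') + (1 - l) * g (x', a') - r')\<^sup>2
      \<le> l * (f (x', a') - r')\<^sup>2 + (1 - l) * (g (x', a') - r')\<^sup>2"
    using power2_convex_combination_le[OF assms] .
  with add show ?case by (simp add: Rsq_def h algebra_simps)
qed

definition Rtilde_minimizer ::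
    "('x \<times> 'a \<Rightarrow> real) set \<Rightarrow> ('x \<times> 'a \<times> real) multiset \<Rightarrow> 'x \<times> 'a \<Rightarrow> real \<Rightarrow> real
      \<Rightarrow> ('x \<times> 'a \<Rightarrow> real) \<Rightarrow> bool" where
  "Rtilde_minimizer F H p r w f \<longleftrightarrow> f \<in> F \<and> (\<forall>g\<in>F. Rtilde H p r f w \<le> Rtilde H p r g w)"

lemma is_oracle_iff_minimizer:
  "is_oracle F H p r orc \<longleftrightarrow> (\<forall>k w. 0 \<le> w \<longrightarrow> Rtilde_minimizer F H p r w (orc k w))"
  by (simp add: is_oracle_def Rtilde_minimizer_def)

text \<open>The derivative of the objective along the segment from \<open>f\<close> towards \<open>g\<close> is nonnegative at \<open>f\<close>.\<close>

lemma Rtilde_minimizer_first_order: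
  assumes f: "Rtilde_minimizer F H p r w f" and g: "g \<in> F"
    and F: "convex_class F" and w: "0 \<le> w"
  shows "0 \<le> Rsq H g - Rsq H f + w * (f p - r) * (g p - f p)"
proof -
  define a where "a = f p - r"
  define c where "c = g p - f p"
  have "0 \<le> (Rsq H g - Rsq H f + w * a * c) + s * (w * c\<^sup>2 / 2)" if s: "0 < s" "s < 1" for s
  proof -
    define h where "h = (\<lambda>q. s * g q + (1 - s) * f q)"
    have "h \<in> F" using F g f s unfolding convex_class_def Rtilde_minimizer_def h_def by auto
    then have "Rsq H f + w / 2 * a\<^sup>2 \<le> Rsq H h + w / 2 * (a + s * c)\<^sup>2"
      using f by (auto simp: Rtilde_minimizer_def Rtilde_def a_def c_def h_def algebra_simps)
    also have "\<dots> \<le> s * Rsq H g + (1 - s) * Rsq H f + w / 2 * (a + s * c)\<^sup>2"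
      using Rsq_convex_combination_le[of s H g f] s by (simp add: h_def)
    finally have "0 \<le> s * ((Rsq H g - Rsq H f + w * a * c) + s * (w * c\<^sup>2 / 2))"
      by (simp add: power2_eq_square algebra_simps)
    then show ?thesis using s by (simp add: zero_le_mult_iff)
  qed
  then have "0 \<le> Rsq H g - Rsq H f + w * a * c" by (rule nonneg_if_nonneg_add_small)
  then show ?thesis by (simp add: a_def c_def)
qed

lemma Rtilde_minimizer_zero_Rsq:
  assumes "Rtilde_minimizer F H p r 0 f0"
  shows "Inf (Rsq H ` F) = Rsq H f0"
  using assms by (intro cInf_eq_minimum) (auto simp: Rtilde_minimizer_def Rtilde_def)

text \<open>On functions with values in \<open>[0, 1]\<close> this is \<open>\<bar>f p - target t\<bar> \<in> [1, 2]\<close>; the affine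
  form makes the identities below hold for all \<open>f\<close>.\<close>

definition target_gap :: "bound_type \<Rightarrow> 'x \<times> 'a \<Rightarrow> ('x \<times> 'a \<Rightarrow> real) \<Rightarrow> real" where
  "target_gap t p f = (case t of High \<Rightarrow> target t - f p | Low \<Rightarrow> f p - target t)"

locale oracle_problem =
  fixes F :: "('x \<times> 'a \<Rightarrow> real) set" and H :: "('x \<times> 'a \<times> real) multiset"
    and p :: "'x \<times> 'a" and t :: bound_type
  assumes values_in_unit: "\<And>f q. f \<in> F \<Longrightarrow> 0 \<le> f q \<and> f q \<le> 1"
    and convex: "convex_class F"
begin

abbreviation "minimizer \<equiv> Rtilde_minimizer F H p (target t)"
abbreviation "gap \<equiv> target_gap t p"

lemma minimizer_in: "minimizer w f \<Longrightarrow> f \<in> F"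
  by (simp add: Rtilde_minimizer_def)

lemma gap_bounds: "f \<in> F \<Longrightarrow> 1 \<le> gap f \<and> gap f \<le> 2"
  using values_in_unit[of f p] by (cases t) (auto simp: target_gap_def target_def)

lemma abs_gap_diff: "\<bar>gap f - gap g\<bar> = \<bar>f p - g p\<bar>"
  by (cases t) (auto simp: target_gap_def)

lemma minimizer_le:
  assumes "minimizer w f" and "g \<in> F"
  shows "Rsq H f + w / 2 * (gap f)\<^sup>2 \<le> Rsq H g + w / 2 * (gap g)\<^sup>2"
proof -
  have "(h p - target t)\<^sup>2 = (gap h)\<^sup>2" for h
    by (cases t) (simp_all add: target_gap_def power2_commute)
  then show ?thesis using assms by (simp add: Rtilde_minimizer_def Rtilde_def)
qed

lemma minimizer_first_order:
  assumes "minimizer w f" and "g \<in> F" and "0 \<le> w"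
  shows "0 \<le> Rsq H g - Rsq H f + w * (gap f * (gap g - gap f))"
proof -
  have "(f p - target t) * (g p - f p) = gap f * (gap g - gap f)"
    by (cases t) (simp_all add: target_gap_def algebra_simps)
  then show ?thesis
    using Rtilde_minimizer_first_order[OF assms(1,2) convex assms(3)] by (simp add: mult.assoc)
qed

lemma near_opt_eq:
  assumes "minimizer 0 f0"
  shows "near_opt F H \<beta> = {f \<in> F. Rsq H f \<le> Rsq H f0 + \<beta>}"
  using Rtilde_minimizer_zero_Rsq[OF assms] by (simp add: near_opt_def)

lemma minimizer_gap_le_near_opt_add:
  assumes f0: "minimizer 0 f0" and f: "minimizer w f" and "0 < w" "\<beta> \<le> w * \<alpha>" "0 \<le> \<alpha>"
    and g: "g \<in> near_opt F H \<beta>"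
  shows "gap f \<le> gap g + \<alpha>"
proof (rule ccontr)
  assume far: "\<not> ?thesis"
  have gF: "g \<in> F" and gR: "Rsq H g \<le> Rsq H f0 + \<beta>" using g by (auto simp: near_opt_eq[OF f0])
  have fF: "f \<in> F" using minimizer_in[OF f] .
  have "Rsq H f0 \<le> Rsq H f" using minimizer_le[OF f0 fF] by simp
  then have "w / 2 * ((gap f)\<^sup>2 - (gap g)\<^sup>2) \<le> w * \<alpha>"
    using minimizer_le[OF f gF] gR \<open>\<beta> \<le> w * \<alpha>\<close> by (simp add: algebra_simps)
  then have "w * ((gap f - gap g) * (gap f + gap g)) \<le> w * (\<alpha> * 2)"
    by (simp add: power2_eq_square algebra_simps)
  then have "(gap f - gap g) * (gap f + gap g) \<le> \<alpha> * 2"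
    using \<open>0 < w\<close> by (rule mult_left_le_imp_le)
  moreover have "\<alpha> * 2 < (gap f - gap g) * (gap f + gap g)"
    using far \<open>0 \<le> \<alpha>\<close> gap_bounds[OF fF] gap_bounds[OF gF]
    by (intro mult_less_le_imp_less) auto
  ultimately show False by simp
qed

lemma minimizer_gap_le_near_opt:
  assumes f0: "minimizer 0 f0" and f: "minimizer w f" and "0 < w" "Rsq H f0 + \<beta> \<le> Rsq H f"
    and g: "g \<in> near_opt F H \<beta>"
  shows "gap f \<le> gap g"
proof -
  have gF: "g \<in> F" and gR: "Rsq H g \<le> Rsq H f0 + \<beta>" using g by (auto simp: near_opt_eq[OF f0])
  have "w * (gap f)\<^sup>2 \<le> w * (gap g)\<^sup>2"
    using minimizer_le[OF f gF] gR \<open>Rsq H f0 + \<beta> \<le> Rsq H f\<close> by simp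
  then have "(gap f)\<^sup>2 \<le> (gap g)\<^sup>2" using \<open>0 < w\<close> by simp
  then show ?thesis
    using gap_bounds[OF minimizer_in[OF f]] gap_bounds[OF gF] by (simp add: power2_le_iff_abs_le)
qed

lemma minimizers_gap_cross:
  assumes fL: "minimizer wL fL" and fH: "minimizer wH fH" and "0 \<le> wL" "0 \<le> wH"
  shows "0 \<le> (gap fL - gap fH) * (wH * gap fH - wL * gap fL)"
  using minimizer_first_order[OF fH minimizer_in[OF fL] \<open>0 \<le> wH\<close>]
    minimizer_first_order[OF fL minimizer_in[OF fH] \<open>0 \<le> wL\<close>]
  by (simp add: algebra_simps)

lemma minimizer_weight_bound_if_not_near_opt:
  assumes f0: "minimizer 0 f0" and f: "minimizer w f" and "0 \<le> w" "0 < \<beta>"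
    and risky: "Rsq H f0 + \<beta> < Rsq H f"
  shows "\<beta> * (gap f + 1) < w * (gap f0)^3"
proof -
  have fF: "f \<in> F" and f0F: "f0 \<in> F" using f f0 by (simp_all add: minimizer_in)
  have \<beta>_less: "\<beta> < w / 2 * ((gap f0)\<^sup>2 - (gap f)\<^sup>2)"
    using minimizer_le[OF f f0F] risky by (simp add: algebra_simps)
  have "(gap f)\<^sup>2 < (gap f0)\<^sup>2"
  proof (rule ccontr)
    assume "\<not> ?thesis"
    then have "w / 2 * ((gap f0)\<^sup>2 - (gap f)\<^sup>2) \<le> 0"
      using \<open>0 \<le> w\<close> by (simp add: mult_nonneg_nonpos)
    with \<beta>_less \<open>0 < \<beta>\<close> show False by linarith
  qed
  then have "gap f < gap f0"
    by (rule power_less_imp_less_base) (use gap_bounds[OF f0F] in auto)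
  have "\<beta> * (gap f + 1) < w / 2 * ((gap f0)\<^sup>2 - (gap f)\<^sup>2) * (gap f + 1)"
    by (rule mult_strict_right_mono) (use \<beta>_less gap_bounds[OF fF] in auto)
  also have "\<dots> \<le> w / 2 * ((gap f0)\<^sup>2 * (2 * gap f0))"
  proof -
    have "((gap f0)\<^sup>2 - (gap f)\<^sup>2) * (gap f + 1) \<le> (gap f0)\<^sup>2 * (2 * gap f0)"
      by (rule mult_mono)
        (use \<open>gap f < gap f0\<close> \<open>(gap f)\<^sup>2 < (gap f0)\<^sup>2\<close> gap_bounds[OF fF] gap_bounds[OF f0F] in auto)
    then show ?thesis using \<open>0 \<le> w\<close> by (simp add: mult.assoc mult_left_mono)
  qed
  also have "\<dots> = w * (gap f0)^3" by (simp add: power2_eq_square power3_eq_cube)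
  finally show ?thesis .
qed

text \<open>If the weights of two minimizers differ by little, the first-order conditions of
  both keep their gaps apart by at most \<open>\<alpha>\<close>; the bound on \<open>wL\<close> from below comes from the
  high minimizer not being near-optimal.\<close>

lemma minimizer_gap_le_add_if_weights_close:
  assumes f0: "minimizer 0 f0" and fL: "minimizer wL fL" and fH: "minimizer wH fH"
    and "0 \<le> wL" "wL \<le> wH" and close: "(wH - wL) * (gap f0)^3 \<le> \<alpha> * \<beta>"
    and "0 < \<beta>" "0 < \<alpha>" "\<alpha> \<le> 1" and risky: "Rsq H f0 + \<beta> < Rsq H fH"
  shows "gap fL \<le> gap fH + \<alpha>"
proof (rule ccontr)
  assume far: "\<not> ?thesis"
  define dL dH d0 where "dL = gap fL" and "dH = gap fH" and "d0 = gap f0"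
  have "0 < dH" "0 < d0"
    using gap_bounds[OF minimizer_in[OF fH]] gap_bounds[OF minimizer_in[OF f0]]
    by (simp_all add: dH_def d0_def)
  have "0 \<le> (dL - dH) * (wH * dH - wL * dL)"
    using minimizers_gap_cross[OF fL fH \<open>0 \<le> wL\<close>] \<open>0 \<le> wL\<close> \<open>wL \<le> wH\<close>
    by (simp add: dL_def dH_def)
  then have "wL * dL \<le> wH * dH"
    using far \<open>0 < \<alpha>\<close> by (simp add: dL_def dH_def zero_le_mult_iff)
  then have "wL * (dL - dH) * d0^3 \<le> ((wH - wL) * d0^3) * dH"
    using \<open>0 < d0\<close> by (simp add: algebra_simps)
  also have "\<dots> \<le> \<alpha> * \<beta> * dH"
    using close \<open>0 < dH\<close> by (simp add: d0_def)
  finally have upper: "(dL - dH) * (wL * d0^3) \<le> \<alpha> * (\<beta> * dH)"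
    by (simp add: algebra_simps)
  have "\<beta> * (dH + 1) < wH * d0^3"
    using minimizer_weight_bound_if_not_near_opt[OF f0 fH _ \<open>0 < \<beta>\<close> risky] \<open>0 \<le> wL\<close> \<open>wL \<le> wH\<close>
    by (simp add: dH_def d0_def)
  moreover have "wH * d0^3 - wL * d0^3 \<le> \<alpha> * \<beta>"
    using close by (simp add: d0_def left_diff_distrib)
  moreover have "\<alpha> * \<beta> \<le> 1 * \<beta>"
    using \<open>\<alpha> \<le> 1\<close> \<open>0 < \<beta>\<close> by (intro mult_right_mono) auto
  ultimately have lower: "\<beta> * dH < wL * d0^3"
    by (simp add: algebra_simps)
  have "0 < \<beta> * dH" using \<open>0 < \<beta>\<close> \<open>0 < dH\<close> by simp
  have "\<alpha> * (wL * d0^3) \<le> (dL - dH) * (wL * d0^3)"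
    using far lower \<open>0 < \<beta> * dH\<close> by (intro mult_right_mono) (auto simp: dL_def dH_def)
  moreover have "\<alpha> * (\<beta> * dH) < \<alpha> * (wL * d0^3)"
    using lower \<open>0 < \<alpha>\<close> by simp
  ultimately show False using upper by linarith
qed

lemma z_bound_within:
  assumes "\<forall>g\<in>near_opt F H \<beta>. gap f \<le> gap g + \<alpha>"
    and "\<exists>g\<in>near_opt F H \<beta>. gap g \<le> gap f + \<alpha>"
  shows "\<bar>f p - z_bound t F H p \<beta>\<bar> \<le> \<alpha>"
proof -
  obtain g0 where g0: "g0 \<in> near_opt F H \<beta>" "gap g0 \<le> gap f + \<alpha>" using assms(2) ..
  have range: "0 \<le> g p \<and> g p \<le> 1" if "g \<in> near_opt F H \<beta>" for g
    using that values_in_unit by (auto simp: near_opt_def)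
  let ?S = "(\<lambda>g. g p) ` near_opt F H \<beta>"
  show ?thesis
  proof (cases t)
    case High
    have "\<bar>Sup ?S - f p\<bar> \<le> \<alpha>"
    proof (rule abs_Sup_diff_le)
      show "bdd_above ?S" using range by (intro bdd_aboveI[of _ 1]) auto
      show "\<forall>y\<in>?S. y \<le> f p + \<alpha>" using assms(1) by (auto simp: High target_gap_def)
      show "\<exists>y\<in>?S. f p - \<alpha> \<le> y" using g0 by (intro bexI[of _ "g0 p"]) (auto simp: High target_gap_def)
    qed
    then show ?thesis by (simp add: High z_bound_def z_high_def abs_minus_commute)
  next
    case Low
    have "\<bar>Inf ?S - f p\<bar> \<le> \<alpha>"
    proof (rule abs_Inf_diff_le)
      show "bdd_below ?S" using range by (intro bdd_belowI[of _ 0]) auto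
      show "\<forall>y\<in>?S. f p - \<alpha> \<le> y" using assms(1) by (auto simp: Low target_gap_def)
      show "\<exists>y\<in>?S. y \<le> f p + \<alpha>" using g0 by (intro bexI[of _ "g0 p"]) (auto simp: Low target_gap_def)
    qed
    then show ?thesis by (simp add: Low z_bound_def z_low_def abs_minus_commute)
  qed
qed

end

type_synonym search_state = "real \<times> real \<times> real \<times> real \<times> nat"

definition calls :: "search_state \<Rightarrow> nat" where
  "calls = (\<lambda>(_, _, _, _, k). k)"

locale binsearch_run = oracle_problem +
  fixes \<beta> \<alpha> :: real and orc
  assumes \<beta>_pos: "0 < \<beta>" and \<alpha>_pos: "0 < \<alpha>" and \<alpha>_less_1: "\<alpha> < 1"
    and orc_spec: "is_oracle F H p (target t) orc"
begin

abbreviation "f0 \<equiv> orc 0 0"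

definition w_max :: real where
  "w_max = \<beta> / \<alpha>"

definition delta :: real where
  "delta = \<alpha> * \<beta> / \<bar>target t - f0 p\<bar> ^ 3"

definition loop_cond :: "search_state \<Rightarrow> bool" where
  "loop_cond = (\<lambda>(wL, zL, wH, zH, k). \<bar>zH - zL\<bar> > \<alpha> \<and> \<bar>wH - wL\<bar> > delta)"

definition loop_step :: "search_state \<Rightarrow> search_state" where
  "loop_step = (\<lambda>(wL, zL, wH, zH, k).
     let w = (wH + wL) / 2; f = orc k w; z = f p
     in if Rsq H f \<ge> Rsq H f0 + \<beta> then (wL, zL, w, z, Suc k) else (w, z, wH, zH, Suc k))"

definition init_state :: search_state where
  "init_state = (0, f0 p, w_max, orc 1 w_max p, 2)"

lemma binsearch_eq_while_option:
  "binsearch t p H \<beta> \<alpha> orc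
     = map_option (\<lambda>(wL, zL, wH, zH, k). (zH, k)) (while_option loop_cond loop_step init_state)"
  unfolding binsearch_def loop_cond_def loop_step_def init_state_def w_max_def delta_def Let_def
  by simp

lemma orc_minimizer: "0 \<le> w \<Longrightarrow> minimizer w (orc k w)"
  using orc_spec by (simp add: is_oracle_iff_minimizer)

lemma f0_minimizer: "minimizer 0 f0"
  by (simp add: orc_minimizer)

lemma delta_eq: "delta = \<alpha> * \<beta> / (gap f0) ^ 3"
proof -
  have "\<bar>target t - f0 p\<bar> = gap f0"
    using gap_bounds[OF minimizer_in[OF f0_minimizer]] by (cases t) (auto simp: target_gap_def)
  then show ?thesis by (simp add: delta_def)
qed

lemma delta_pos: "0 < delta"
  using gap_bounds[OF minimizer_in[OF f0_minimizer]] \<alpha>_pos \<beta>_pos by (simp add: delta_eq)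

definition search_inv :: "search_state \<Rightarrow> bool" where
  "search_inv = (\<lambda>(wL, zL, wH, zH, k).
     0 \<le> wL \<and> (wH - wL) * 2 ^ k = 4 * w_max \<and> delta < 2 * (wH - wL) \<and>
     (\<exists>fL. minimizer wL fL \<and> fL p = zL \<and> fL \<in> near_opt F H \<beta>) \<and>
     (\<exists>fH. minimizer wH fH \<and> fH p = zH \<and> (\<forall>g\<in>near_opt F H \<beta>. gap fH \<le> gap g + \<alpha>)))"

lemma search_inv_width_pos:
  assumes "search_inv (wL, zL, wH, zH, k)"
  shows "wL < wH"
proof -
  have "0 < (wH - wL) * 2 ^ k"
    using assms \<alpha>_pos \<beta>_pos by (simp add: search_inv_def w_max_def)
  then show ?thesis by (simp add: zero_less_mult_iff)
qed

lemma search_inv_init: "search_inv init_state"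
proof -
  have "delta \<le> \<alpha> * \<beta>"
    using gap_bounds[OF minimizer_in[OF f0_minimizer]] \<alpha>_pos \<beta>_pos
    by (simp add: delta_eq divide_le_eq one_le_power)
  also have "\<dots> < 2 * w_max"
  proof -
    have "\<alpha> * \<alpha> < 1 * 1" by (rule mult_strict_mono) (use \<alpha>_pos \<alpha>_less_1 in auto)
    then show ?thesis using \<alpha>_pos \<beta>_pos by (simp add: w_max_def field_simps)
  qed
  finally have "delta < 2 * (w_max - 0)" by simp
  moreover have "f0 \<in> near_opt F H \<beta>"
    using minimizer_in[OF f0_minimizer] \<beta>_pos by (simp add: near_opt_eq[OF f0_minimizer])
  moreover have "\<forall>g\<in>near_opt F H \<beta>. gap (orc 1 w_max) \<le> gap g + \<alpha>"
    using \<alpha>_pos \<beta>_pos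
    by (auto intro!: minimizer_gap_le_near_opt_add[OF f0_minimizer] orc_minimizer
        simp: w_max_def)
  ultimately show ?thesis
    using f0_minimizer orc_minimizer[of w_max 1] \<alpha>_pos \<beta>_pos
    by (auto simp: search_inv_def init_state_def w_max_def)
qed

lemma search_inv_step:
  assumes inv: "search_inv s" and cond: "loop_cond s"
  shows "search_inv (loop_step s) \<and> calls (loop_step s) = Suc (calls s)"
proof -
  obtain wL zL wH zH k where s: "s = (wL, zL, wH, zH, k)" by (cases s)
  obtain fL fH where "0 \<le> wL" and width: "(wH - wL) * 2 ^ k = 4 * w_max"
    and fL: "minimizer wL fL" "fL p = zL" "fL \<in> near_opt F H \<beta>"
    and fH: "minimizer wH fH" "fH p = zH" "\<forall>g\<in>near_opt F H \<beta>. gap fH \<le> gap g + \<alpha>"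
    using inv by (auto simp: search_inv_def s)
  have "0 < wH - wL" using search_inv_width_pos inv by (simp add: s)
  then have delta_less: "delta < wH - wL" using cond by (simp add: loop_cond_def s)
  define w where "w = (wH + wL) / 2"
  define f where "f = orc k w"
  have "0 < w" using \<open>0 \<le> wL\<close> \<open>0 < wH - wL\<close> by (simp add: w_def)
  then have f: "minimizer w f" by (simp add: f_def orc_minimizer)
  have halves: "(w - wL) * 2 ^ Suc k = 4 * w_max" "(wH - w) * 2 ^ Suc k = 4 * w_max"
    using width by (simp_all add: w_def algebra_simps)
  have "delta < 2 * (w - wL)" "delta < 2 * (wH - w)" using delta_less by (simp_all add: w_def field_simps)
  note new = halves this
  show ?thesis
  proof (cases "Rsq H f0 + \<beta> \<le> Rsq H f")
    case True
    have "gap f \<le> gap g + \<alpha>" if "g \<in> near_opt F H \<beta>" for g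
      using minimizer_gap_le_near_opt[OF f0_minimizer f \<open>0 < w\<close> True that] \<alpha>_pos by simp
    then show ?thesis
      using True new \<open>0 \<le> wL\<close> fL f
      by (auto simp: s loop_step_def search_inv_def calls_def Let_def simp flip: w_def f_def)
  next
    case False
    then have "f \<in> near_opt F H \<beta>"
      using minimizer_in[OF f] by (simp add: near_opt_eq[OF f0_minimizer])
    then show ?thesis
      using False new \<open>0 < w\<close> fH f
      by (auto simp: s loop_step_def search_inv_def calls_def Let_def simp flip: w_def f_def)
  qed
qed

lemma pow2_calls_less:
  assumes "search_inv s"
  shows "2 ^ calls s < 8 * w_max / delta"
proof -
  obtain wL zL wH zH k where s: "s = (wL, zL, wH, zH, k)" by (cases s)
  then have "delta < 2 * (wH - wL)" and width: "(wH - wL) * 2 ^ k = 4 * w_max"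
    using assms by (auto simp: search_inv_def)
  then have "delta * 2 ^ k < 8 * w_max"
    using mult_strict_right_mono[of delta "2 * (wH - wL)" "2 ^ k"] by (simp add: algebra_simps)
  then show ?thesis using delta_pos by (simp add: s calls_def field_simps)
qed

lemma while_terminates: "\<exists>s. while_option loop_cond loop_step init_state = Some s"
proof -
  define N where "N = nat \<lceil>8 * w_max / delta\<rceil>"
  have "calls s < N" if "search_inv s" for s
  proof -
    have "real (calls s) < 8 * w_max / delta"
      using of_nat_less_two_power[of "calls s", where 'a = real] pow2_calls_less[OF that] by linarith
    then show ?thesis by (simp add: N_def zless_nat_eq_int_zless less_ceiling_iff)
  qed
  then show ?thesis
    using search_inv_step search_inv_init
    by (intro measure_while_option_Some[where P = search_inv and f = "\<lambda>s. N - calls s"])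
      (auto simp: diff_less_mono2)
qed

lemma search_final_accuracy:
  assumes inv: "search_inv (wL, zL, wH, zH, k)" and stop: "\<not> loop_cond (wL, zL, wH, zH, k)"
  shows "\<bar>zH - z_bound t F H p \<beta>\<bar> \<le> \<alpha>"
proof -
  obtain fL fH where "0 \<le> wL"
    and fL: "minimizer wL fL" "fL p = zL" "fL \<in> near_opt F H \<beta>"
    and fH: "minimizer wH fH" "fH p = zH" "\<forall>g\<in>near_opt F H \<beta>. gap fH \<le> gap g + \<alpha>"
    using inv by (auto simp: search_inv_def)
  have "0 < wH - wL" using search_inv_width_pos[OF inv] by simp
  have "\<exists>g\<in>near_opt F H \<beta>. gap g \<le> gap fH + \<alpha>"
  proof (cases "\<bar>zH - zL\<bar> \<le> \<alpha>")
    case True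
    then have "gap fL \<le> gap fH + \<alpha>" using abs_gap_diff[of fL fH] fL(2) fH(2) by linarith
    then show ?thesis using fL(3) by blast
  next
    case False
    then have "wH - wL \<le> delta" using stop \<open>0 < wH - wL\<close> by (simp add: loop_cond_def)
    then have close: "(wH - wL) * (gap f0) ^ 3 \<le> \<alpha> * \<beta>"
      using gap_bounds[OF minimizer_in[OF f0_minimizer]] by (simp add: delta_eq pos_le_divide_eq)
    show ?thesis
    proof (cases "fH \<in> near_opt F H \<beta>")
      case False
      then have "Rsq H f0 + \<beta> < Rsq H fH"
        using minimizer_in[OF fH(1)] by (simp add: near_opt_eq[OF f0_minimizer])
      then have "gap fL \<le> gap fH + \<alpha>"
        using minimizer_gap_le_add_if_weights_close[OF f0_minimizer fL(1) fH(1) \<open>0 \<le> wL\<close> _ close]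
          \<open>0 < wH - wL\<close> \<alpha>_pos \<alpha>_less_1 \<beta>_pos by simp
      then show ?thesis using fL(3) by blast
    qed (use \<alpha>_pos in \<open>auto intro!: bexI[of _ fH]\<close>)
  qed
  then show ?thesis using z_bound_within fH by blast
qed

lemma binsearch_correct:
  "\<exists>z k. binsearch t p H \<beta> \<alpha> orc = Some (z, k) \<and>
     real k \<le> 6 * (1 + ln (1 / \<alpha>)) \<and> \<bar>z - z_bound t F H p \<beta>\<bar> \<le> \<alpha>"
proof -
  obtain wL zL wH zH k where run: "while_option loop_cond loop_step init_state = Some (wL, zL, wH, zH, k)"
    using while_terminates by (metis prod_cases5)
  have inv: "search_inv (wL, zL, wH, zH, k)"
    by (rule while_option_rule[where P = search_inv, OF _ run search_inv_init]) (use search_inv_step in blast)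
  have "2 ^ k < 8 * w_max / delta" using pow2_calls_less[OF inv] by (simp add: calls_def)
  also have "\<dots> = 8 * (gap f0) ^ 3 / \<alpha>\<^sup>2"
    using gap_bounds[OF minimizer_in[OF f0_minimizer]] \<alpha>_pos \<beta>_pos
    by (simp add: w_max_def delta_eq field_simps power2_eq_square)
  also have "\<dots> \<le> 8 * 2 ^ 3 / \<alpha>\<^sup>2"
    using gap_bounds[OF minimizer_in[OF f0_minimizer]]
    by (intro divide_right_mono mult_left_mono power_mono) auto
  finally have "real k \<le> 6 * (1 + ln (1 / \<alpha>))"
    using \<alpha>_pos \<alpha>_less_1 by (intro le_of_pow2_less) auto
  moreover have "\<bar>zH - z_bound t F H p \<beta>\<bar> \<le> \<alpha>"
    using search_final_accuracy[OF inv while_option_stop[OF run]] .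
  ultimately show ?thesis using run by (simp add: binsearch_eq_while_option)
qed

end

theorem theorem1:
  "\<exists>C::real. \<forall>(F :: ('x \<times> 'a::finite \<Rightarrow> real) set) (H :: ('x \<times> 'a \<times> real) multiset)
      (p :: 'x \<times> 'a) (\<beta>::real) (\<alpha>::real) (t::bound_type) orc.
     F \<noteq> {} \<and>
     (\<forall>f\<in>F. \<forall>q. 0 \<le> f q \<and> f q \<le> 1) \<and>
     convex_class F \<and>
     closed F \<and>
     (\<forall>(x', a', r') \<in> set_mset H. 0 \<le> r' \<and> r' \<le> 1) \<and>
     0 < \<beta> \<and> 0 < \<alpha> \<and> \<alpha> < 1 \<and>
     is_oracle F H p (target t) orc
     \<longrightarrow> (\<exists>z k. binsearch t p H \<beta> \<alpha> orc = Some (z, k) \<and>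
               real k \<le> C * (1 + ln (1 / \<alpha>)) \<and>
               \<bar>z - z_bound t F H p \<beta>\<bar> \<le> \<alpha>)"
  by (rule exI[of _ 6], intro allI impI binsearch_run.binsearch_correct)
    (auto simp: binsearch_run_def binsearch_run_axioms_def oracle_problem_def)

end
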